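(* Let $q$ be odd, $\varepsilon=\left(\frac{-1}{q}\right)$, $m=(q-\varepsilon)/4$. (i) The map $\pi(b)=b^2-2$ is a permutation of $\mathcal B_2^{-+}$, and for $b\in\mathcal B_2^{-+}$, $\pi^{-1}(b)=\prod\{b-a: a\in\mathcal B_2^{--}\}$; moreover $\pi^{-1}(b)$ is the unique square root of $2+b$ such that $2+\sqrt{2+b}$ is a square. (ii) The map $\sigma(b)=2-b^2$ is a permutation of $\mathcal B_2^{+-}$, and for $b\in\mathcal B_2^{+-}$, $\sigma^{-1}(b)=-\left(\frac{2}{q}\right)\prod\{b-a:a\in\mathcal B_2^{--}\}$; moreover $\sigma^{-1}(b)$ is the unique square root of $2-b$ such that $\sqrt{2-b}+2$ is a nonsquare. (iii) Let $\lambda\in{\mathbb F}_q^\times$ and $\nu=\left(\frac{2\lambda}{q}\right)$. Then $\pi_\lambda(b)=(2\nu/\lambda)b^2-\nu\lambda$ is a permutation of $\mathcal B_\lambda^{-+}$ and $\sigma_\lambda(b)=-(2\nu/\lambda)b^2+\nu\lambda$ is a permutation of $\mathcal B_\lambda^{+-}$, with inverses $\pi_\lambda^{-1}(b)=(2\nu/\lambda)^{m-1}\prod\{b-a:a\in\mathcal B_\lambda^{-\nu,-\nu}\}$ for $b\in\mathcal B_\lambda^{-+}$ and $\sigma_\lambda^{-1}(b)=-\left(\frac2q\right)(2\nu/\lambda)^{m-1}\prod\{b-a:a\in\mathcal B_\lambda^{-\nu,-\nu}\}$ for $b\in\mathcal B_\lambda^{+-}$. If $b\in\mathcal B_\lambda^{-+}$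 and $c=\pi_\lambda^{-1}(b)$ then $c$ is the square root of $(\lambda\nu b+\lambda^2)/2$ for which $c+\lambda$ is a square; if $b\in\mathcal B_\lambda^{+-}$ and $c=\sigma_\lambda^{-1}(b)$ then $c$ is the square root of $(-\lambda\nu b+\lambda^2)/2$ for which $c+\lambda$ is a nonsquare.
   Context: $\left(\frac{a}{q}\right)$ is the Legendre symbol on ${\mathbb F}_q$ ($1$ for nonzero squares, $-1$ for nonsquares, $0$ at $0$). For $\lambda\in{\mathbb F}_q^\times$ and $\varepsilon_1,\varepsilon_2\in\{1,-1\}$ (written $+,-$), $\mathcal B_\lambda^{\varepsilon_1,\varepsilon_2}=\{b\in{\mathbb F}_q:\left(\frac{\lambda-b}{q}\right)=\varepsilon_1,\ \left(\frac{\lambda+b}{q}\right)=\varepsilon_2\}$. *)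

theory Defs
  imports Main
begin

definition leg :: "'a::{finite,field} \<Rightarrow> int" where
  "leg a = (if a = 0 then 0 else if (\<exists>y. y ^ 2 = a) then 1 else -1)"

definition is_square :: "'a::field \<Rightarrow> bool" where
  "is_square x \<longleftrightarrow> (\<exists>y. y ^ 2 = x)"

definition Bset :: "'a::{finite,field} \<Rightarrow> int \<Rightarrow> int \<Rightarrow> 'a set" where
  "Bset l e1 e2 = {b. leg (l - b) = e1 \<and> leg (l + b) = e2}"

definition mval :: "'a::{finite,field} itself \<Rightarrow> nat" where
  "mval _ = nat ((int (card (UNIV::'a set)) - leg (-1::'a)) div 4)"

end

theory Submission
  imports Defs "HOL-Library.Cardinality" "HOL-Computational_Algebra.Polynomial" "HOL-Number_Theory.Cong"
begin

text \<open>
  Write \<open>q = 2h + 1\<close>, \<open>\<nu> = leg (2 l)\<close>, \<open>\<kappa> = 2 \<nu> / l\<close> and \<open>\<pi>(y) = \<kappa> y\<^sup>2 - \<nu> l\<close>.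
  Everything rests on the polynomial identity
    \<open>(l + y)^(h+1) + (l - y)^(h+1) = 2 \<kappa>^(m-1) \<Prod>a \<in> B(-\<nu>,-\<nu>). (\<pi>(y) - a)\<close>.
  The right-hand side is \<open>2 \<kappa>^(2m-1)\<close> times the monic product of the quadratics \<open>y\<^sup>2 - w\<close>
  with \<open>\<pi>(y) - a = \<kappa> (y\<^sup>2 - w)\<close>; for these \<open>w\<close>, both \<open>w\<close> and \<open>l\<^sup>2 - w\<close> are nonsquares, which makes
  Frobenius act as \<open>y \<mapsto> -y\<close> modulo \<open>y\<^sup>2 - w\<close> and forces \<open>y\<^sup>2 - w\<close> to divide the left-hand side.
  A Jacobsthal sum shows that there are \<open>m\<close> such quadratics, and comparing degrees and
  leading coefficients gives the identity.

  For \<open>c \<in> B(-,+)\<close> Euler's criterion gives \<open>(l + c)^h = 1\<close> and \<open>(l - c)^h = -1\<close>, so the left-hand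
  side at \<open>y = c\<close> is \<open>2c\<close>: this recovers \<open>c\<close> from \<open>\<pi>(c)\<close>. A sign computation shows that \<open>\<pi>\<close>
  maps \<open>B(-,+)\<close> into itself, and it is injective there because \<open>\<pi>(c) = \<pi>(c')\<close> forces
  \<open>c' = \<plusminus>c\<close> while \<open>c\<close> and \<open>-c\<close> never lie in \<open>B(-,+)\<close> together. The case of \<open>\<sigma> = -\<pi>\<close> on
  \<open>B(+,-)\<close> is the same up to the sign \<open>(-1)^m\<close>, which equals \<open>leg 2\<close> by the identity for
  \<open>l = 1\<close> evaluated at \<open>y = 0\<close> and \<open>y = 1\<close>.
\<close>


text \<open>Each factor is congruent to a nonzero constant modulo any other one, which replaces a
  coprimality argument (polynomials over an arbitrary field carry no gcd instance).\<close>
lemma prod_monic_quadratics_dvd: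
  fixes T :: "'b::field poly"
  assumes "finite S" "inj_on w S" "\<And>a. a \<in> S \<Longrightarrow> [:-w a, 0, 1:] dvd T"
  shows "(\<Prod>a\<in>S. [:-w a, 0, 1:]) dvd T"
  using assms
proof (induction S rule: finite_induct)
  case (insert a S)
  let ?M = "\<lambda>a. [:-w a, 0, 1:]"
  have "w a \<notin> w ` S" using insert.prems(1) insert.hyps(2) by (auto simp: inj_on_insert)
  have "(\<Prod>b\<in>S. ?M b) dvd T" using insert by (simp add: inj_on_insert)
  then obtain R where R: "T = (\<Prod>b\<in>S. ?M b) * R" by (auto elim: dvdE)
  define c where "c = (\<Prod>b\<in>S. w a - w b)"
  have "c \<noteq> 0" using \<open>w a \<notin> w ` S\<close> insert.hyps(1) by (auto simp: c_def)
  have "[(\<Prod>b\<in>S. ?M b) = (\<Prod>b\<in>S. [:w a - w b:])] (mod ?M a)"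
    by (intro cong_prod) (simp add: cong_iff_dvd_diff)
  hence "[(\<Prod>b\<in>S. ?M b) * R = [:c:] * R] (mod ?M a)"
    unfolding c_def prod_to_poly by (rule cong_scalar_right)
  moreover have "?M a dvd (\<Prod>b\<in>S. ?M b) * R" using insert.prems(2) R by simp
  ultimately have "?M a dvd [:c:] * R" by (simp only: cong_dvd_iff)
  hence "?M a dvd smult c R" by simp
  hence "?M a dvd R" using \<open>c \<noteq> 0\<close> by (rule dvd_smult_cancel)
  then obtain R' where "R = ?M a * R'" by (auto elim: dvdE)
  hence "T = (?M a * (\<Prod>b\<in>S. ?M b)) * R'" using R by (simp only: ac_simps)
  thus ?case using insert.hyps by simp
qed simp

lemma monic_dvd_imp_eq_smult:
  fixes p q :: "'b::field poly"
  assumes "q dvd p" "p \<noteq> 0" "degree p \<le> degree q" "lead_coeff q = 1"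
  shows "p = smult (coeff p (degree q)) q"
proof -
  obtain r where r: "p = q * r" using assms(1) by (auto elim: dvdE)
  with assms(2) have "q \<noteq> 0" "r \<noteq> 0" by auto
  hence "degree r = 0" using assms(3) r degree_mult_eq[of q r] by simp
  hence "r = [:coeff r 0:]" by (simp add: degree_0_id)
  hence "p = q * [:coeff r 0:]" using r by simp
  hence "p = smult (coeff r 0) q" by simp
  moreover from this have "coeff p (degree q) = coeff r 0" using assms(4) by simp
  ultimately show ?thesis by (simp only:)
qed

lemma coeff_linear_power_sum:
  "coeff ([:l, 1:] ^ n + [:l, -1:] ^ n) j =
     (if j \<le> n then of_nat (n choose j) * l ^ (n - j) * (1 + (-1) ^ j) else (0::'b::comm_ring_1))"
proof (cases "j \<le> n")
  case False
  have "degree ([:l, 1:] ^ n + [:l, -1:] ^ n) \<le> n"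
    by (intro degree_add_le order.trans[OF degree_power_le]) auto
  thus ?thesis using False coeff_eq_0[of "[:l, 1:] ^ n + [:l, -1:] ^ n" j] by (simp del: coeff_add)
qed (simp add: coeff_linear_poly_power algebra_simps)

lemma Bset_uminus: "- b \<in> Bset l e1 e2 \<longleftrightarrow> b \<in> Bset l e2 e1"
  by (auto simp: Bset_def)

lemma Bset_mixed_not_uminus: "e1 \<noteq> e2 \<Longrightarrow> c \<in> Bset l e1 e2 \<Longrightarrow> - c \<notin> Bset l e1 e2"
  by (auto simp: Bset_uminus) (auto simp: Bset_def)

lemma bij_betw_self_if_even:
  fixes f :: "'b::group_add \<Rightarrow> 'b"
  assumes "finite B" "f ` B \<subseteq> B"
    and "\<And>c c'. f c = f c' \<Longrightarrow> c' = c \<or> c' = - c"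
    and "\<And>c. c \<in> B \<Longrightarrow> - c \<notin> B"
  shows "bij_betw f B B"
proof -
  have "inj_on f B" using assms(3,4) by (fastforce intro: inj_onI)
  thus ?thesis using assms(1,2) by (simp add: bij_betw_def endo_inj_surj)
qed

lemma square_root_unique:
  fixes c c' :: "'b::idom"
  assumes "c' ^ 2 = c ^ 2" "P (c' + l)" "\<not> P (l - c)"
  shows "c' = c"
  using assms by (auto simp: power2_eq_iff)

section \<open>The maps \<open>\<pi>\<^sub>\<lambda>\<close> and the set \<open>B\<^sub>\<lambda>^(-\<nu>,-\<nu>)\<close>\<close>

text \<open>With \<open>\<nu> = nu l\<close>, the paper's maps are \<open>\<pi>\<^sub>\<lambda> = pi_map l\<close> and \<open>\<sigma>\<^sub>\<lambda> = - pi_map l\<close>, and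
  \<open>Bdiag l\<close> is \<open>B\<^sub>\<lambda>^(-\<nu>,-\<nu>)\<close>; \<open>pi_sq_preimage l a\<close> is the value of \<open>y\<^sup>2\<close> at which
  \<open>pi_map l y = a\<close>.\<close>
definition nu :: "'a::{finite,field} \<Rightarrow> 'a" where
  "nu l = of_int (leg (2 * l))"

definition kappa :: "'a::{finite,field} \<Rightarrow> 'a" where
  "kappa l = 2 * nu l / l"

definition pi_map :: "'a::{finite,field} \<Rightarrow> 'a \<Rightarrow> 'a" where
  "pi_map l b = kappa l * b ^ 2 - nu l * l"

definition Bdiag :: "'a::{finite,field} \<Rightarrow> 'a set" where
  "Bdiag l = Bset l (- leg (2 * l)) (- leg (2 * l))"

definition pi_sq_preimage :: "'a::{finite,field} \<Rightarrow> 'a \<Rightarrow> 'a" where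
  "pi_sq_preimage l a = (a + nu l * l) / kappa l"

context
  assumes "SORT_CONSTRAINT('a::{finite,field})"
  assumes odd_card: "odd (CARD('a))"
begin

section \<open>Finite fields of odd order: Euler's criterion\<close>

lemma card_ge_3: "CARD('a) \<ge> 3"
proof -
  have "card {0::'a, 1} \<le> CARD('a)" by (intro card_mono) auto
  with odd_card show ?thesis by (simp, presburger)
qed

lemma card_eq_Suc_twice_half: "CARD('a) = 2 * ((CARD('a) - 1) div 2) + 1"
  using odd_card by presburger

lemma half_card_ge_1: "(CARD('a) - 1) div 2 \<ge> 1"
  using card_ge_3 by linarith

lemma of_nat_card_eq_0: "of_nat CARD('a) = (0::'a)"
proof -
  have "(\<Sum>x\<in>(UNIV::'a set). x + 1) = (\<Sum>x\<in>UNIV. x)"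
    by (rule sum.reindex_bij_witness[of _ "\<lambda>x. x - 1" "\<lambda>x. x + 1"]) auto
  thus ?thesis by (simp add: sum.distrib)
qed

lemma two_neq_zero: "(2::'a) \<noteq> 0"
proof
  assume two: "(2::'a) = 0"
  have "(of_nat CARD('a) :: 'a) = 2 * of_nat ((CARD('a) - 1) div 2) + 1"
    by (subst card_eq_Suc_twice_half) simp
  also have "\<dots> = 1" by (simp add: two)
  finally show False using of_nat_card_eq_0 by simp
qed

lemma one_neq_minus_one: "(1::'a) \<noteq> -1"
  using two_neq_zero by (metis add_eq_0_iff one_add_one)

lemma power_card_minus_1: "(x::'a) \<noteq> 0 \<Longrightarrow> x ^ (CARD('a) - 1) = 1"
proof -
  assume x: "x \<noteq> 0"
  let ?S = "UNIV - {0::'a}"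
  have "(\<Prod>y\<in>?S. x * y) = (\<Prod>y\<in>?S. y)"
    by (rule prod.reindex_bij_witness[of _ "\<lambda>y. y / x" "\<lambda>y. x * y"]) (use x in auto)
  moreover have "(\<Prod>y\<in>?S. x * y) = x ^ card ?S * (\<Prod>y\<in>?S. y)"
    by (simp add: prod.distrib)
  moreover have "card ?S = CARD('a) - 1" by (simp add: card_Diff_subset)
  ultimately show ?thesis by simp
qed

lemma power_card: "(x::'a) ^ CARD('a) = x"
proof (cases "x = 0")
  case False
  have "x ^ CARD('a) = x * x ^ (CARD('a) - 1)"
    using card_ge_3 by (simp flip: power_Suc)
  thus ?thesis using power_card_minus_1[OF False] by simp
qed (use card_ge_3 in simp)

lemma square_roots_eq: "r ^ 2 = (s::'a) \<Longrightarrow> {y. y ^ 2 = s} = {r, -r}"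
  by (auto simp: power2_eq_iff)

lemma card_nonzero_squares_ge: "(CARD('a) - 1) div 2 \<le> card {x::'a. x \<noteq> 0 \<and> is_square x}"
proof -
  let ?Sq = "{x::'a. x \<noteq> 0 \<and> is_square x}"
  have "UNIV - {0::'a} \<subseteq> (\<Union>s\<in>?Sq. {y. y ^ 2 = s})"
    by (auto simp: is_square_def)
  hence "CARD('a) - 1 \<le> card (\<Union>s\<in>?Sq. {y. y ^ 2 = s})"
    using card_mono[of "\<Union>s\<in>?Sq. {y. y ^ 2 = s}" "UNIV - {0}"] by (simp add: card_Diff_subset)
  also have "\<dots> \<le> (\<Sum>s\<in>?Sq. card {y. y ^ 2 = s})" by (rule card_UN_le) simp
  also have "\<dots> \<le> (\<Sum>s\<in>?Sq. 2)"
  proof (rule sum_mono)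
    fix s assume "s \<in> ?Sq"
    then obtain r where "r ^ 2 = s" by (auto simp: is_square_def)
    thus "card {y. y ^ 2 = s} \<le> 2" by (simp add: square_roots_eq card_insert_le_m1)
  qed
  finally show ?thesis by simp
qed

lemma square_power_half_card: "is_square (x::'a) \<Longrightarrow> x \<noteq> 0 \<Longrightarrow> x ^ ((CARD('a) - 1) div 2) = 1"
proof -
  assume "is_square x" "x \<noteq> 0"
  then obtain y where y: "y ^ 2 = x" "y \<noteq> 0" by (auto simp: is_square_def)
  have "2 * ((CARD('a) - 1) div 2) = CARD('a) - 1"
    using card_eq_Suc_twice_half by linarith
  hence "x ^ ((CARD('a) - 1) div 2) = y ^ (CARD('a) - 1)"
    by (metis y(1) power_mult)
  thus ?thesis using power_card_minus_1[OF y(2)] by simp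
qed

text \<open>The nonzero squares already fill the (at most) \<open>(q - 1)/2\<close> roots of \<open>X^((q-1)/2) - 1\<close>.\<close>
lemma is_square_if_power_half_card: "(x::'a) ^ ((CARD('a) - 1) div 2) = 1 \<Longrightarrow> is_square x"
proof -
  assume x: "x ^ ((CARD('a) - 1) div 2) = 1"
  define h where "h = (CARD('a) - 1) div 2"
  let ?Sq = "{x::'a. x \<noteq> 0 \<and> is_square x}"
  let ?p = "monom (1::'a) h - 1"
  have h: "h \<ge> 1" using half_card_ge_1 h_def by simp
  have p: "?p \<noteq> 0"
  proof
    assume "?p = 0"
    hence "coeff ?p h = 0" by simp
    thus False using h by simp
  qed
  have roots: "?Sq \<subseteq> {x. poly ?p x = 0}"
    using square_power_half_card h_def by (auto simp: poly_monom)
  have "degree ?p \<le> h"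
    by (intro degree_diff_le) (auto simp: degree_monom_le)
  hence "card {x. poly ?p x = 0} \<le> h"
    using card_poly_roots_bound[OF p] by linarith
  moreover have "card ?Sq \<le> card {x. poly ?p x = 0}"
    by (intro card_mono poly_roots_finite p roots)
  ultimately have "?Sq = {x. poly ?p x = 0}"
    using card_nonzero_squares_ge h_def by (intro card_subset_eq poly_roots_finite p roots) simp
  moreover have "poly ?p x = 0" using x h_def by (simp add: poly_monom)
  ultimately show ?thesis by auto
qed

lemma euler_criterion: "(of_int (leg x) :: 'a) = x ^ ((CARD('a) - 1) div 2)"
proof -
  define h where "h = (CARD('a) - 1) div 2"
  have h: "h \<ge> 1" using half_card_ge_1 h_def by simp
  consider "x = 0" | "x \<noteq> 0" "is_square x" | "x \<noteq> 0" "\<not> is_square x" by blast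
  thus ?thesis
  proof cases
    case 3
    have "(x ^ h) ^ 2 = 1"
      using power_card_minus_1[OF 3(1)] card_eq_Suc_twice_half
      by (metis h_def add_diff_cancel_right' mult.commute power_mult)
    hence "x ^ h = 1 \<or> x ^ h = -1" by (simp add: power2_eq_1_iff)
    thus ?thesis using 3 is_square_if_power_half_card h_def by (auto simp: leg_def is_square_def)
  qed (use h h_def square_power_half_card in \<open>auto simp: leg_def is_square_def\<close>)
qed

lemma leg_cases: "leg (x::'a) \<in> {-1, 0, 1}"
  by (simp add: leg_def)

lemma leg_eq_0_iff [simp]: "leg (x::'a) = 0 \<longleftrightarrow> x = 0"
  by (simp add: leg_def)

lemma leg_eq_1_iff: "leg (x::'a) = 1 \<longleftrightarrow> x \<noteq> 0 \<and> is_square x"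
  by (simp add: leg_def is_square_def)

lemma leg_eq_minus_1_iff: "leg (x::'a) = -1 \<longleftrightarrow> \<not> is_square x"
  by (auto simp: leg_def is_square_def)

lemma leg_nonzero: "(x::'a) \<noteq> 0 \<Longrightarrow> leg x = 1 \<or> leg x = -1"
  by (simp add: leg_def)

lemma of_int_sign_inj:
  "u \<in> {-1, 0, 1} \<Longrightarrow> v \<in> {-1, 0, 1} \<Longrightarrow> (of_int u :: 'a) = of_int v \<Longrightarrow> u = v"
  using one_neq_minus_one by auto

lemma leg_mult: "leg ((x::'a) * y) = leg x * leg y"
proof (rule of_int_sign_inj)
  show "leg x * leg y \<in> {-1, 0, 1}" using leg_cases[of x] leg_cases[of y] by auto
  show "(of_int (leg (x * y)) :: 'a) = of_int (leg x * leg y)"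
    by (simp add: euler_criterion power_mult_distrib)
qed (rule leg_cases)

lemma leg_square: "(x::'a) \<noteq> 0 \<Longrightarrow> leg (x ^ 2) = 1"
  by (auto simp: leg_def)

lemma leg_one [simp]: "leg (1::'a) = 1"
  using leg_square[of 1] by simp

lemma leg_mult_square: "(x::'a) \<noteq> 0 \<Longrightarrow> leg (x ^ 2 * y) = leg y"
  by (simp add: leg_mult leg_square)

lemma leg_times_leg: "leg (x::'a) * leg x = (if x = 0 then 0 else 1)"
  using leg_cases[of x] by (auto simp: leg_def)

section \<open>Character sums and the size of \<open>B\<^sub>\<lambda>^(-\<nu>,-\<nu>)\<close>\<close>

lemma card_square_roots: "int (card {b::'a. b ^ 2 = t}) = 1 + leg t"
proof (cases "is_square t")
  case True
  then obtain r where r: "r ^ 2 = t" by (auto simp: is_square_def)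
  show ?thesis
  proof (cases "t = 0")
    case False
    hence "r \<noteq> - r" using r two_neq_zero by (auto simp: mult_2[symmetric] eq_neg_iff_add_eq_0)
    thus ?thesis using r square_roots_eq[OF r] False by (auto simp: leg_def)
  qed (use r square_roots_eq[OF r] in simp)
next
  case False
  hence "{b. b ^ 2 = t} = {}" by (auto simp: is_square_def)
  thus ?thesis using False leg_eq_minus_1_iff[of t] by simp
qed

lemma sum_over_squares:
  "(\<Sum>b\<in>UNIV. f ((b::'a) ^ 2)) = (\<Sum>t\<in>UNIV. f t * (1 + leg t))"
proof -
  have "(\<Sum>b\<in>UNIV. f ((b::'a) ^ 2)) = (\<Sum>b\<in>UNIV. \<Sum>t\<in>UNIV. if b ^ 2 = t then f t else 0)"
    by simp
  also have "\<dots> = (\<Sum>t\<in>UNIV. \<Sum>b\<in>{b. b ^ 2 = t}. f t)"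
    by (subst sum.swap) (simp add: sum.If_cases Int_def)
  also have "\<dots> = (\<Sum>t\<in>UNIV. f t * (1 + leg t))"
    by (simp add: mult.commute flip: card_square_roots)
  finally show ?thesis .
qed

lemma sum_leg: "(\<Sum>x\<in>UNIV. leg (x::'a)) = 0"
  using sum_over_squares[of "\<lambda>_. 1"] by (simp add: sum.distrib)

lemma sum_leg_add: "(\<Sum>x\<in>UNIV. leg (c + (x::'a))) = 0"
proof -
  have "(\<Sum>x\<in>UNIV. leg (c + (x::'a))) = (\<Sum>x\<in>UNIV. leg (x::'a))"
    by (rule sum.reindex_bij_witness[where i="\<lambda>x. x - c" and j="\<lambda>x. c + x"]) auto
  thus ?thesis using sum_leg by simp
qed

lemma sum_leg_diff: "(\<Sum>x\<in>UNIV. leg (c - (x::'a))) = 0"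
proof -
  have "(\<Sum>x\<in>UNIV. leg (c - (x::'a))) = (\<Sum>x\<in>UNIV. leg (x::'a))"
    by (rule sum.reindex_bij_witness[where i="\<lambda>x. c - x" and j="\<lambda>x. c - x"]) auto
  thus ?thesis using sum_leg by simp
qed

text \<open>Jacobsthal's evaluation: substituting \<open>u = 1 - c/t\<close> turns the sum into \<open>\<Sum>u \<noteq> 1. leg u\<close>.\<close>
lemma sum_leg_square_minus: "(c::'a) \<noteq> 0 \<Longrightarrow> (\<Sum>b\<in>UNIV. leg (b ^ 2 - c)) = -1"
proof -
  assume c: "c \<noteq> 0"
  have "(\<Sum>b\<in>UNIV. leg (b ^ 2 - c)) = (\<Sum>t\<in>UNIV. leg (t - c) * (1 + leg t))"
    by (rule sum_over_squares)
  also have "\<dots> = (\<Sum>t\<in>UNIV. leg (t - c) + leg (t * (t - c)))"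
    by (simp add: leg_mult distrib_left mult.commute)
  also have "\<dots> = (\<Sum>t\<in>UNIV. leg (t * (t - c)))"
    using sum_leg_add[of "-c"] by (simp add: sum.distrib)
  also have "\<dots> = (\<Sum>t\<in>UNIV - {0}. leg (t * (t - c)))"
    by (rule sum.mono_neutral_right) auto
  also have "\<dots> = (\<Sum>t\<in>UNIV - {0}. leg (1 - c / t))"
  proof (rule sum.cong)
    fix t assume "t \<in> (UNIV::'a set) - {0}"
    hence "t * (t - c) = t ^ 2 * (1 - c / t)" by (simp add: field_simps power2_eq_square)
    thus "leg (t * (t - c)) = leg (1 - c / t)" using \<open>t \<in> UNIV - {0}\<close> by (simp add: leg_mult_square)
  qed simp
  also have "\<dots> = (\<Sum>u\<in>UNIV - {1}. leg (u::'a))"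
    by (rule sum.reindex_bij_witness[of _ "\<lambda>u. c / (1 - u)" "\<lambda>t. 1 - c / t"])
      (use c in \<open>auto simp: field_simps\<close>)
  also have "\<dots> = -1"
    using sum_leg by (simp add: sum_diff1)
  finally show ?thesis .
qed

lemma sum_leg_diff_times_leg_add: "(l::'a) \<noteq> 0 \<Longrightarrow> (\<Sum>b\<in>UNIV. leg (l - b) * leg (l + b)) = - leg (-1::'a)"
proof -
  assume "l \<noteq> 0"
  have "leg (l - b) * leg (l + b) = leg (-1::'a) * leg (b ^ 2 - l ^ 2)" for b
    by (simp add: leg_mult[symmetric] algebra_simps power2_eq_square)
  thus ?thesis using sum_leg_square_minus[of "l ^ 2"] \<open>l \<noteq> 0\<close> by (simp flip: sum_distrib_left)
qed

lemma indicator_Bset_diag: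
  assumes "(l::'a) \<noteq> 0" and n: "n = leg (2 * l)"
  shows "(1 - n * leg (l - b)) * (1 - n * leg (l + b)) = (if b \<in> Bset l (-n) (-n) then 4 else 0)"
proof -
  have "n \<in> {-1, 1}" using leg_nonzero[of "2 * l"] assms two_neq_zero by auto
  show ?thesis
  proof (cases "b = l \<or> b = -l")
    case True
    thus ?thesis using \<open>n \<in> {-1, 1}\<close> n by (auto simp: Bset_def)
  next
    case False
    hence "l - b \<noteq> 0" "l + b \<noteq> 0" by (auto simp: add_eq_0_iff)
    thus ?thesis using \<open>n \<in> {-1, 1}\<close> leg_nonzero[of "l - b"] leg_nonzero[of "l + b"]
      by (auto simp: Bset_def)
  qed
qed

lemma card_Bset_diag:
  assumes "(l::'a) \<noteq> 0"
  shows "4 * int (card (Bset l (- leg (2 * l)) (- leg (2 * l)))) = int CARD('a) - leg (-1::'a)"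
proof -
  define n where "n = leg (2 * l)"
  have "n * n = 1" using leg_times_leg[of "2 * l"] assms two_neq_zero n_def by simp
  have "4 * int (card (Bset l (-n) (-n))) = (\<Sum>b\<in>UNIV. (1 - n * leg (l - b)) * (1 - n * leg (l + b)))"
    using indicator_Bset_diag[OF assms n_def] by (simp add: sum.If_cases Int_def)
  also have "\<dots> = int CARD('a) - n * (\<Sum>b\<in>UNIV. leg (l - b)) - n * (\<Sum>b\<in>UNIV. leg (l + b))
      + (n * n) * (\<Sum>b\<in>UNIV. leg (l - b) * leg (l + b))"
    by (simp add: algebra_simps sum.distrib sum_subtractf sum_distrib_left)
  also have "\<dots> = int CARD('a) - leg (-1::'a)"
    using sum_leg_diff[of l] sum_leg_add[of l] sum_leg_diff_times_leg_add[OF assms] \<open>n * n = 1\<close> by simp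
  finally show ?thesis by (simp add: n_def)
qed

section \<open>Frobenius modulo a quadratic with nonsquare constant term\<close>

lemma linear_power_card: "[:l, 1:] ^ CARD('a) = monom 1 CARD('a) + [:l::'a:]"
proof (rule poly_eqI_degree_lead_coeff[where n="CARD('a)" and A=UNIV])
  have "coeff [:l:] CARD('a) = 0" using card_ge_3 by (intro coeff_eq_0) auto
  thus "coeff ([:l, 1:] ^ CARD('a)) CARD('a) = coeff (monom 1 CARD('a) + [:l:]) CARD('a)"
    by (simp add: coeff_linear_power)
  show "degree (monom 1 CARD('a) + [:l:]) \<le> CARD('a)"
    by (intro degree_add_le) (auto simp: degree_monom_le)
  fix z :: 'a
  show "poly ([:l, 1:] ^ CARD('a)) z = poly (monom 1 CARD('a) + [:l:]) z"
    using power_card[of "l + z"] power_card[of z] by (simp add: poly_monom algebra_simps)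
qed (simp_all add: degree_linear_power)

lemma linear_power_card_cong:
  assumes "\<not> is_square (w::'a)"
  shows "[[:l, 1:] ^ CARD('a) = [:l, -1:]] (mod [:-w, 0, 1:])"
proof -
  define h where "h = (CARD('a) - 1) div 2"
  let ?M = "[:-w, 0, 1:]" and ?X = "[:0, 1:] :: 'a poly"
  have "w ^ h = -1" using euler_criterion[of w] assms leg_eq_minus_1_iff[of w] h_def by simp
  have "[?X ^ 2 = [:w:]] (mod ?M)"
    by (simp add: cong_iff_dvd_diff power2_eq_square)
  hence "[(?X ^ 2) ^ h = [:w:] ^ h] (mod ?M)" by (rule cong_pow)
  hence "[?X * (?X ^ 2) ^ h + [:l:] = ?X * [:w:] ^ h + [:l:]] (mod ?M)"
    by (intro cong_add cong_scalar_left cong_refl)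
  moreover have "?X * (?X ^ 2) ^ h + [:l:] = [:l, 1:] ^ CARD('a)"
  proof -
    have "CARD('a) = Suc (2 * h)" using card_eq_Suc_twice_half h_def by simp
    hence "?X * (?X ^ 2) ^ h = ?X ^ CARD('a)" by (simp only: power_mult power_Suc)
    thus ?thesis by (simp only: linear_power_card[of l] monom_altdef smult_1_left)
  qed
  moreover have "?X * [:w:] ^ h + [:l:] = [:l, -1:]"
    by (simp only: poly_const_pow \<open>w ^ h = -1\<close>) simp
  ultimately show ?thesis by simp
qed

text \<open>Modulo \<open>X\<^sup>2 - w\<close>, with \<open>u = (l + X)^((q+1)/2)\<close> we get \<open>u\<^sup>2 = (l + X)^q (l + X) = l\<^sup>2 - w\<close>,
  and then \<open>(l - X)^((q+1)/2) = u^q = u (l\<^sup>2 - w)^((q-1)/2) = -u\<close>.\<close>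
lemma monic_quadratic_dvd_power_sum:
  fixes w l :: 'a
  assumes h: "h = (CARD('a) - 1) div 2"
    and "\<not> is_square w" and "\<not> is_square (l ^ 2 - w)"
  shows "[:-w, 0, 1:] dvd [:l, 1:] ^ (h + 1) + [:l, -1:] ^ (h + 1)"
proof -
  let ?M = "[:-w, 0, 1:]"
  define u where "u = [:l, 1:] ^ (h + 1)"
  have q: "CARD('a) = 2 * h + 1" using card_eq_Suc_twice_half h by simp
  have "(l ^ 2 - w) ^ h = -1"
    using euler_criterion[of "l ^ 2 - w"] assms leg_eq_minus_1_iff[of "l ^ 2 - w"] by simp
  have frob: "[[:l, 1:] ^ CARD('a) = [:l, -1:]] (mod ?M)"
    using assms(2) by (rule linear_power_card_cong)
  have "(h + 1) * 2 = Suc (2 * h + 1)" by simp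
  hence "u ^ 2 = [:l, 1:] ^ Suc (2 * h + 1)"
    by (simp only: u_def power_mult[symmetric])
  hence "u ^ 2 = [:l, 1:] ^ CARD('a) * [:l, 1:]"
    by (simp only: q power_Suc2)
  hence "[u ^ 2 = [:l, -1:] * [:l, 1:]] (mod ?M)"
    by (simp only: cong_scalar_right[OF frob])
  also have "[[:l, -1:] * [:l, 1:] = [:l ^ 2 - w:]] (mod ?M)"
  proof -
    have "[:l, -1:] * [:l, 1:] - [:l ^ 2 - w:] = - ?M" by (simp add: power2_eq_square)
    thus ?thesis by (simp only: cong_iff_dvd_diff dvd_minus_iff dvd_refl)
  qed
  finally have u2: "[u ^ 2 = [:l ^ 2 - w:]] (mod ?M)" .
  have "[[:l, -1:] ^ (h + 1) = ([:l, 1:] ^ CARD('a)) ^ (h + 1)] (mod ?M)"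
    using cong_pow[OF frob] by (rule cong_sym)
  also have "([:l, 1:] ^ CARD('a)) ^ (h + 1) = u * (u ^ 2) ^ h"
  proof -
    have "CARD('a) * (h + 1) = (h + 1) + (h + 1) * 2 * h" using q by (simp add: algebra_simps)
    thus ?thesis by (simp only: u_def power_mult[symmetric] power_add[symmetric])
  qed
  also have "[u * (u ^ 2) ^ h = u * [:l ^ 2 - w:] ^ h] (mod ?M)"
    by (intro cong_scalar_left cong_pow u2)
  also have "u * [:l ^ 2 - w:] ^ h = - u"
    by (simp only: poly_const_pow \<open>(l ^ 2 - w) ^ h = -1\<close>) simp
  finally have "[u + [:l, -1:] ^ (h + 1) = u + - u] (mod ?M)" by (rule cong_add[OF cong_refl])
  thus ?thesis by (simp add: u_def cong_0_iff)
qed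

section \<open>The key polynomial identity\<close>

lemma leg_two_mult_cases: "(l::'a) \<noteq> 0 \<Longrightarrow> leg (2 * l) = 1 \<or> leg (2 * l) = -1"
  using leg_nonzero[of "2 * l"] two_neq_zero by simp

lemma nu_cases: "(l::'a) \<noteq> 0 \<Longrightarrow> nu l = 1 \<or> nu l = -1"
  using leg_two_mult_cases[of l] by (auto simp: nu_def)

lemma nu_times_nu: "(l::'a) \<noteq> 0 \<Longrightarrow> nu l * nu l = 1"
  using nu_cases[of l] by auto

lemma kappa_nonzero: "(l::'a) \<noteq> 0 \<Longrightarrow> kappa l \<noteq> 0"
  using nu_times_nu[of l] two_neq_zero by (auto simp: kappa_def)

lemma pi_map_minus_eq: "(l::'a) \<noteq> 0 \<Longrightarrow> pi_map l y - a = kappa l * (y ^ 2 - pi_sq_preimage l a)"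
  using kappa_nonzero[of l] by (simp add: pi_map_def pi_sq_preimage_def field_simps)

lemma leg_inverse_square_mult: "(d::'a) \<noteq> 0 \<Longrightarrow> leg ((1 / d) ^ 2 * x) = leg x"
  by (simp add: leg_mult_square)

lemma leg_kappa: "(l::'a) \<noteq> 0 \<Longrightarrow> leg (kappa l) = leg (2 * l) * leg (nu l)"
proof -
  assume l: "l \<noteq> 0"
  have "kappa l = (1 / l) ^ 2 * ((2 * l) * nu l)" using l by (simp add: kappa_def field_simps power2_eq_square)
  thus ?thesis using l by (simp add: leg_mult leg_square)
qed

lemma pi_sq_preimage_eq:
  assumes "(l::'a) \<noteq> 0"
  shows "pi_sq_preimage l a = (1 / 2) ^ 2 * ((2 * l) * (l + nu l * a))"
    and "l ^ 2 - pi_sq_preimage l a = (1 / 2) ^ 2 * ((2 * l) * (l - nu l * a))"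
proof -
  have "(4::'a) \<noteq> 0" using two_neq_zero by (metis mult_2_right mult_eq_0_iff numeral_Bit0)
  thus "pi_sq_preimage l a = (1 / 2) ^ 2 * ((2 * l) * (l + nu l * a))"
    "l ^ 2 - pi_sq_preimage l a = (1 / 2) ^ 2 * ((2 * l) * (l - nu l * a))"
    using nu_cases[OF assms] assms two_neq_zero
    by (auto simp: pi_sq_preimage_def kappa_def field_simps power2_eq_square)
qed

lemma leg_Bdiag:
  assumes "(l::'a) \<noteq> 0" "a \<in> Bdiag l"
  shows "leg (l + nu l * a) = - leg (2 * l)" "leg (l - nu l * a) = - leg (2 * l)"
  using assms leg_two_mult_cases[OF assms(1)] by (auto simp: Bdiag_def Bset_def nu_def)

lemma not_is_square_pi_sq_preimage:
  assumes "(l::'a) \<noteq> 0" "a \<in> Bdiag l"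
  shows "\<not> is_square (pi_sq_preimage l a)" "\<not> is_square (l ^ 2 - pi_sq_preimage l a)"
proof -
  have sq: "leg (2 * l) * leg (2 * l) = 1" using leg_times_leg[of "2 * l"] assms two_neq_zero by simp
  have "leg (pi_sq_preimage l a) = leg (2 * l) * leg (l + nu l * a)"
    unfolding pi_sq_preimage_eq(1)[OF assms(1)] leg_inverse_square_mult[OF two_neq_zero] by (rule leg_mult)
  thus "\<not> is_square (pi_sq_preimage l a)"
    using leg_Bdiag(1)[OF assms] sq by (simp flip: leg_eq_minus_1_iff)
  have "leg (l ^ 2 - pi_sq_preimage l a) = leg (2 * l) * leg (l - nu l * a)"
    unfolding pi_sq_preimage_eq(2)[OF assms(1)] leg_inverse_square_mult[OF two_neq_zero] by (rule leg_mult)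
  thus "\<not> is_square (l ^ 2 - pi_sq_preimage l a)"
    using leg_Bdiag(2)[OF assms] sq by (simp flip: leg_eq_minus_1_iff)
qed

lemma Bdiag_uminus: "a \<in> Bdiag (l::'a) \<Longrightarrow> - a \<in> Bdiag l"
  by (simp add: Bdiag_def Bset_uminus)

lemma prod_Bdiag_uminus: "(\<Prod>a\<in>Bdiag (l::'a). f (- a)) = (\<Prod>a\<in>Bdiag l. f a)"
  by (rule prod.reindex_bij_witness[where i=uminus and j=uminus]) (auto intro: Bdiag_uminus)

lemma four_mval: "4 * int (mval TYPE('a)) = int CARD('a) - leg (-1::'a)"
proof -
  have "int CARD('a) - leg (-1::'a) = 4 * int (card (Bdiag (1::'a)))"
    using card_Bset_diag[of 1] by (simp add: Bdiag_def)
  thus ?thesis by (simp add: mval_def)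
qed

lemma card_Bdiag: "(l::'a) \<noteq> 0 \<Longrightarrow> card (Bdiag l) = mval TYPE('a)"
  using card_Bset_diag[of l] four_mval by (simp add: Bdiag_def)

lemma mval_ge_1: "mval TYPE('a) \<ge> 1"
  using four_mval leg_cases[of "-1::'a"] card_ge_3 by auto

lemma leg_minus_one_eq_power: "leg (-1::'a) = (if even ((CARD('a) - 1) div 2) then 1 else -1)"
proof (rule of_int_sign_inj)
  show "(of_int (leg (-1::'a)) :: 'a) = of_int (if even ((CARD('a) - 1) div 2) then 1 else -1)"
    by (simp add: euler_criterion)
qed (use leg_cases[of "-1::'a"] in auto)

text \<open>The leading coefficient sits in degree \<open>h\<close> or \<open>h + 1\<close>, depending on \<open>q mod 4\<close>, and in
  both cases the identity \<open>\<kappa>\<^sup>h = leg \<kappa>\<close> turns it into \<open>2 \<kappa>\<^sup>2\<^sup>m\<^sup>-\<^sup>1\<close>.\<close>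
lemma power_sum_degree_coeff:
  assumes l: "(l::'a) \<noteq> 0" and h: "h = (CARD('a) - 1) div 2"
  defines "T \<equiv> [:l, 1:] ^ (h + 1) + [:l, -1:] ^ (h + 1)" and "m \<equiv> mval TYPE('a)"
  shows "degree T \<le> 2 * m \<and> coeff T (2 * m) = 2 * kappa l ^ (2 * m - 1)"
proof -
  define k where "k = kappa l"
  have q: "CARD('a) = 2 * h + 1" using card_eq_Suc_twice_half h by simp
  have m4: "4 * int m = int (2 * h + 1) - leg (-1::'a)" using four_mval q m_def by simp
  have "h \<ge> 1" using half_card_ge_1 h by simp
  have kh: "k ^ h = of_int (leg (2 * l) * leg (nu l))"
    using euler_criterion[of k] leg_kappa[OF l] h k_def by simp
  have cT: "coeff T j = (if j \<le> h + 1 then of_nat ((h + 1) choose j) * l ^ (h + 1 - j) * (1 + (-1) ^ j) else 0)" for j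
    unfolding T_def by (rule coeff_linear_power_sum)
  show ?thesis
  proof (cases "even h")
    case True
    hence "leg (-1::'a) = 1" using leg_minus_one_eq_power h by simp
    hence hm: "h = 2 * m" using m4 by simp
    have "leg (nu l) = 1" using nu_cases[OF l] \<open>leg (-1::'a) = 1\<close> by auto
    hence "k * k ^ (h - 1) = nu l" using kh \<open>h \<ge> 1\<close> by (simp add: nu_def flip: power_Suc)
    hence "k ^ (h - 1) = nu l / k" using kappa_nonzero[OF l] k_def by (simp add: field_simps)
    moreover have "2 * (nu l / k) = l"
      using l two_neq_zero nu_times_nu[OF l] by (auto simp: k_def kappa_def field_simps)
    ultimately have "2 * k ^ (h - 1) = l" by simp
    moreover have "degree T \<le> h"
      by (rule degree_le) (use True in \<open>auto simp: cT le_Suc_eq\<close>)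
    moreover have "(of_nat (h + 1) * 2 :: 'a) = 1"
      using of_nat_card_eq_0 by (simp add: q algebra_simps)
    hence "coeff T h = l" using True by (simp add: cT)
    ultimately show ?thesis using hm by (simp add: k_def)
  next
    case False
    hence "leg (-1::'a) = -1" using leg_minus_one_eq_power h by simp
    hence hm: "h + 1 = 2 * m" using m4 by simp
    have "leg (2 * l) * leg (nu l) = 1"
      using leg_two_mult_cases[OF l] \<open>leg (-1::'a) = -1\<close> by (auto simp: nu_def)
    hence "k ^ h = 1" using kh by simp
    moreover have "degree T \<le> h + 1" by (rule degree_le) (simp add: cT)
    moreover have "coeff T (h + 1) = 2" using False by (simp add: cT)
    ultimately show ?thesis by (simp add: hm[symmetric] k_def)
  qed
qed

lemma power_sum_poly_eq:
  assumes l: "(l::'a) \<noteq> 0" and h: "h = (CARD('a) - 1) div 2"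
  shows "[:l, 1:] ^ (h + 1) + [:l, -1:] ^ (h + 1)
    = smult (2 * kappa l ^ (2 * mval TYPE('a) - 1)) (\<Prod>a\<in>Bdiag l. [:- pi_sq_preimage l a, 0, 1:])"
    (is "?T = smult ?c ?P")
proof -
  have "?P dvd ?T"
  proof (rule prod_monic_quadratics_dvd)
    show "inj_on (pi_sq_preimage l) (Bdiag l)"
      using kappa_nonzero[OF l] by (auto simp: inj_on_def pi_sq_preimage_def)
    show "[:- pi_sq_preimage l a, 0, 1:] dvd ?T" if "a \<in> Bdiag l" for a
      using not_is_square_pi_sq_preimage[OF l that] by (intro monic_quadratic_dvd_power_sum h)
  qed simp
  moreover have "lead_coeff ?P = 1" by (simp add: lead_coeff_prod)
  moreover have "degree ?P = 2 * mval TYPE('a)"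
    using card_Bdiag[OF l] by (simp add: degree_prod_sum_eq)
  moreover have "?T \<noteq> 0"
  proof
    assume "?T = 0"
    hence "2 * kappa l ^ (2 * mval TYPE('a) - 1) = 0"
      using power_sum_degree_coeff[OF l h] by (metis coeff_0)
    thus False using kappa_nonzero[OF l] two_neq_zero by simp
  qed
  ultimately show ?thesis
    using power_sum_degree_coeff[OF l h] monic_dvd_imp_eq_smult[of ?P ?T] by simp
qed

lemma power_sum_eq_prod:
  assumes l: "(l::'a) \<noteq> 0" and h: "h = (CARD('a) - 1) div 2"
  shows "(l + y) ^ (h + 1) + (l - y) ^ (h + 1)
    = 2 * kappa l ^ (mval TYPE('a) - 1) * (\<Prod>a\<in>Bdiag l. pi_map l y - a)"
proof -
  define m where "m = mval TYPE('a)"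
  define k where "k = kappa l"
  have "(l + y) ^ (h + 1) + (l - y) ^ (h + 1) = poly ([:l, 1:] ^ (h + 1) + [:l, -1:] ^ (h + 1)) y"
    by (simp add: algebra_simps)
  also have "\<dots> = 2 * k ^ (2 * m - 1) * (\<Prod>a\<in>Bdiag l. y ^ 2 - pi_sq_preimage l a)"
    by (simp only: power_sum_poly_eq[OF l h] poly_smult poly_prod k_def m_def)
      (simp add: power2_eq_square)
  also have "2 * m - 1 = (m - 1) + m" using mval_ge_1 m_def by simp
  hence "k ^ (2 * m - 1) = k ^ (m - 1) * k ^ m" by (simp only: power_add)
  also have "2 * (k ^ (m - 1) * k ^ m) * (\<Prod>a\<in>Bdiag l. y ^ 2 - pi_sq_preimage l a)
      = 2 * k ^ (m - 1) * (\<Prod>a\<in>Bdiag l. k * (y ^ 2 - pi_sq_preimage l a))"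
    using card_Bdiag[OF l] m_def by (simp add: prod.distrib)
  also have "\<dots> = 2 * k ^ (m - 1) * (\<Prod>a\<in>Bdiag l. pi_map l y - a)"
    by (simp add: pi_map_minus_eq[OF l] k_def)
  finally show ?thesis by (simp add: m_def k_def)
qed

section \<open>Inverting \<open>\<pi>\<^sub>\<lambda>\<close> and \<open>\<sigma>\<^sub>\<lambda>\<close>\<close>

lemma pi_map_inverse_prod:
  assumes l: "(l::'a) \<noteq> 0" and c: "c \<in> Bset l (-1) 1"
  shows "c = kappa l ^ (mval TYPE('a) - 1) * (\<Prod>a\<in>Bdiag l. pi_map l c - a)"
proof -
  define h where "h = (CARD('a) - 1) div 2"
  have "(l + c) ^ h = 1" "(l - c) ^ h = -1"
    using c euler_criterion[of "l + c"] euler_criterion[of "l - c"] by (simp_all add: Bset_def h_def)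
  hence "2 * c = (l + c) ^ (h + 1) + (l - c) ^ (h + 1)" by simp
  also have "\<dots> = 2 * (kappa l ^ (mval TYPE('a) - 1) * (\<Prod>a\<in>Bdiag l. pi_map l c - a))"
    unfolding power_sum_eq_prod[OF l h_def] by (simp only: mult.assoc)
  finally show ?thesis using two_neq_zero by simp
qed

text \<open>Evaluating the key identity for \<open>l = 1\<close> at \<open>y = 0\<close> and at \<open>y = 1\<close>, where
  \<open>\<pi>(0) = -\<nu>\<close> and \<open>\<pi>(1) = \<nu>\<close>, compares the two sides up to the sign \<open>(-1)\<^sup>m\<close>.\<close>
lemma of_int_leg_two: "(of_int (leg (2::'a)) :: 'a) = (-1) ^ mval TYPE('a)"
proof -
  define h where "h = (CARD('a) - 1) div 2"
  define m where "m = mval TYPE('a)"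
  define P where "P = (\<Prod>a\<in>Bdiag (1::'a). - nu 1 - a)"
  have one: "(1::'a) \<noteq> 0" by simp
  have "(2::'a) = (1 + 0) ^ (h + 1) + (1 - 0) ^ (h + 1)" by simp
  also have "\<dots> = 2 * kappa 1 ^ (m - 1) * P"
    unfolding power_sum_eq_prod[OF one h_def] by (simp add: P_def pi_map_def m_def)
  finally have P: "2 * kappa 1 ^ (m - 1) * P = 2" ..
  have "(\<Prod>a\<in>Bdiag (1::'a). nu 1 - a) = (\<Prod>a\<in>Bdiag (1::'a). nu 1 + a)"
    using prod_Bdiag_uminus[where l=1 and f="\<lambda>a. nu 1 + a"] by simp
  also have "\<dots> = (\<Prod>a\<in>Bdiag (1::'a). (-1) * (- nu 1 - a))" by (intro prod.cong) simp_all
  also have "\<dots> = (-1) ^ m * P"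
    by (simp only: prod.distrib prod_constant card_Bdiag[OF one] P_def m_def)
  finally have Q: "(\<Prod>a\<in>Bdiag (1::'a). nu 1 - a) = (-1) ^ m * P" .
  have "2 * nu (1::'a) = 2 * 2 ^ h" using euler_criterion[of 2] by (simp add: nu_def h_def)
  also have "\<dots> = (1 + 1) ^ (h + 1) + (1 - 1) ^ (h + 1)" by simp
  also have "\<dots> = 2 * kappa 1 ^ (m - 1) * (\<Prod>a\<in>Bdiag (1::'a). nu 1 - a)"
    unfolding power_sum_eq_prod[OF one h_def] by (simp add: pi_map_def kappa_def m_def)
  also have "\<dots> = 2 * (-1) ^ m" using P by (simp add: Q algebra_simps)
  finally show ?thesis using two_neq_zero by (simp add: nu_def m_def)
qed

lemma neg_pi_map_inverse_prod:
  assumes l: "(l::'a) \<noteq> 0" and c: "c \<in> Bset l 1 (-1)"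
  shows "c = - of_int (leg (2::'a)) * kappa l ^ (mval TYPE('a) - 1) * (\<Prod>a\<in>Bdiag l. - pi_map l c - a)"
proof -
  define h where "h = (CARD('a) - 1) div 2"
  define m where "m = mval TYPE('a)"
  define P where "P = (\<Prod>a\<in>Bdiag l. pi_map l c - a)"
  have "(l + c) ^ h = -1" "(l - c) ^ h = 1"
    using c euler_criterion[of "l + c"] euler_criterion[of "l - c"] by (simp_all add: Bset_def h_def)
  hence "2 * (- c) = (l + c) ^ (h + 1) + (l - c) ^ (h + 1)" by simp
  also have "\<dots> = 2 * (kappa l ^ (m - 1) * P)"
    unfolding power_sum_eq_prod[OF l h_def] P_def m_def by (simp only: mult.assoc)
  finally have "- c = kappa l ^ (m - 1) * P" using two_neq_zero mult_cancel_left[of 2 "- c"] by blast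
  moreover have prod_neg: "(\<Prod>a\<in>Bdiag l. - pi_map l c - a) = (-1) ^ m * P"
  proof -
    have "(\<Prod>a\<in>Bdiag l. - pi_map l c - a) = (\<Prod>a\<in>Bdiag l. - pi_map l c + a)"
      using prod_Bdiag_uminus[where f="\<lambda>a. - pi_map l c + a"] by simp
    also have "\<dots> = (\<Prod>a\<in>Bdiag l. (-1) * (pi_map l c - a))" by simp
    also have "\<dots> = (-1) ^ m * P"
      by (simp only: prod.distrib prod_constant card_Bdiag[OF l] P_def m_def)
    finally show ?thesis .
  qed
  moreover define s where "s = (-1::'a) ^ m"
  moreover have "s * s = 1" by (simp add: s_def flip: power_mult_distrib)
  moreover have "(of_int (leg (2::'a)) :: 'a) = s" using of_int_leg_two m_def s_def by simp
  ultimately have "- of_int (leg (2::'a)) * kappa l ^ (m - 1) * (\<Prod>a\<in>Bdiag l. - pi_map l c - a)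
      = - ((s * s) * (kappa l ^ (m - 1) * P))"
    by (simp add: algebra_simps)
  also have "\<dots> = c" using \<open>s * s = 1\<close> \<open>- c = kappa l ^ (m - 1) * P\<close> by (simp add: minus_equation_iff)
  finally show ?thesis by (simp add: m_def)
qed

lemma pi_map_sign:
  assumes l: "(l::'a) \<noteq> 0" and c: "leg (l - c) * leg (l + c) = -1"
  shows "leg (l - pi_map l c) = -1 \<and> leg (l + pi_map l c) = 1"
proof -
  have "c \<noteq> 0" using c leg_times_leg[of l] l by auto
  have sq: "leg ((2 * l) * c ^ 2) = leg (2 * l)" using \<open>c \<noteq> 0\<close> by (simp add: leg_mult leg_square)
  have diff: "leg ((2 * l) * ((l - c) * (l + c))) = - leg (2 * l)" using c by (simp add: leg_mult)
  consider "leg (2 * l) = 1" | "leg (2 * l) = -1" using leg_two_mult_cases[OF l] by blast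
  thus ?thesis
  proof cases
    case 1
    have "l - pi_map l c = (1 / l) ^ 2 * ((2 * l) * ((l - c) * (l + c)))"
      "l + pi_map l c = (1 / l) ^ 2 * ((2 * l) * c ^ 2)"
      using l 1 by (simp_all add: pi_map_def kappa_def nu_def field_simps power2_eq_square)
    thus ?thesis using sq diff 1 by (simp add: leg_inverse_square_mult[OF l])
  next
    case 2
    have "l - pi_map l c = (1 / l) ^ 2 * ((2 * l) * c ^ 2)"
      "l + pi_map l c = (1 / l) ^ 2 * ((2 * l) * ((l - c) * (l + c)))"
      using l 2 by (simp_all add: pi_map_def kappa_def nu_def field_simps power2_eq_square)
    thus ?thesis using sq diff 2 by (simp add: leg_inverse_square_mult[OF l])
  qed
qed

lemma pi_map_eq_imp_eq_or_neg: "(l::'a) \<noteq> 0 \<Longrightarrow> pi_map l c = pi_map l c' \<Longrightarrow> c' = c \<or> c' = - c"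
  using kappa_nonzero[of l] by (auto simp: pi_map_def power2_eq_iff)

lemma bij_betw_pi_map: "(l::'a) \<noteq> 0 \<Longrightarrow> bij_betw (pi_map l) (Bset l (-1) 1) (Bset l (-1) 1)"
  by (rule bij_betw_self_if_even)
    (auto simp: Bset_def pi_map_sign dest: pi_map_eq_imp_eq_or_neg Bset_mixed_not_uminus)

lemma bij_betw_neg_pi_map: "(l::'a) \<noteq> 0 \<Longrightarrow> bij_betw (\<lambda>b. - pi_map l b) (Bset l 1 (-1)) (Bset l 1 (-1))"
  by (rule bij_betw_self_if_even)
    (auto simp: Bset_def pi_map_sign dest: pi_map_eq_imp_eq_or_neg Bset_mixed_not_uminus)

lemma pi_map_eq_imp_square: "(l::'a) \<noteq> 0 \<Longrightarrow> pi_map l c = b \<Longrightarrow> c ^ 2 = (l * nu l * b + l ^ 2) / 2"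
  using two_neq_zero nu_cases[of l]
  by (auto simp: pi_map_def kappa_def field_simps power2_eq_square)

lemma inv_pi_map:
  assumes l: "(l::'a) \<noteq> 0" and b: "b \<in> Bset l (-1) 1"
  defines "c \<equiv> inv_into (Bset l (-1) 1) (pi_map l) b"
  shows "c = kappa l ^ (mval TYPE('a) - 1) * (\<Prod>a\<in>Bdiag l. b - a)"
    and "c ^ 2 = (l * nu l * b + l ^ 2) / 2"
    and "is_square (c + l)"
    and "\<And>c'. c' ^ 2 = (l * nu l * b + l ^ 2) / 2 \<Longrightarrow> is_square (c' + l) \<Longrightarrow> c' = c"
proof -
  have "b \<in> pi_map l ` Bset l (-1) 1" using bij_betw_pi_map[OF l] b by (simp add: bij_betw_def)
  hence c: "c \<in> Bset l (-1) 1" "pi_map l c = b" unfolding c_def by (auto intro: inv_into_into f_inv_into_f)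
  show "c = kappa l ^ (mval TYPE('a) - 1) * (\<Prod>a\<in>Bdiag l. b - a)"
    using pi_map_inverse_prod[OF l c(1)] c(2) by simp
  show sq: "c ^ 2 = (l * nu l * b + l ^ 2) / 2" using pi_map_eq_imp_square[OF l c(2)] .
  show "is_square (c + l)" using c(1) by (simp add: Bset_def leg_eq_1_iff add.commute)
  show "c' = c" if "c' ^ 2 = (l * nu l * b + l ^ 2) / 2" "is_square (c' + l)" for c'
  proof (rule square_root_unique[where P=is_square])
    show "c' ^ 2 = c ^ 2" by (simp only: that(1) sq)
    show "\<not> is_square (l - c)" using c(1) leg_eq_minus_1_iff[of "l - c"] by (simp add: Bset_def)
  qed (rule that(2))
qed

lemma inv_neg_pi_map:
  assumes l: "(l::'a) \<noteq> 0" and b: "b \<in> Bset l 1 (-1)"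
  defines "c \<equiv> inv_into (Bset l 1 (-1)) (\<lambda>b. - pi_map l b) b"
  shows "c = - of_int (leg (2::'a)) * kappa l ^ (mval TYPE('a) - 1) * (\<Prod>a\<in>Bdiag l. b - a)"
    and "c ^ 2 = (- l * nu l * b + l ^ 2) / 2"
    and "\<not> is_square (c + l)"
    and "\<And>c'. c' ^ 2 = (- l * nu l * b + l ^ 2) / 2 \<Longrightarrow> \<not> is_square (c' + l) \<Longrightarrow> c' = c"
proof -
  have "b \<in> (\<lambda>b. - pi_map l b) ` Bset l 1 (-1)" using bij_betw_neg_pi_map[OF l] b by (simp add: bij_betw_def)
  hence c: "c \<in> Bset l 1 (-1)" "- pi_map l c = b" unfolding c_def by (auto intro: inv_into_into f_inv_into_f)
  show "c = - of_int (leg (2::'a)) * kappa l ^ (mval TYPE('a) - 1) * (\<Prod>a\<in>Bdiag l. b - a)"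
    using neg_pi_map_inverse_prod[OF l c(1)] c(2) by simp
  have "pi_map l c = - b" by (subst c(2)[symmetric]) simp
  from pi_map_eq_imp_square[OF l this] show sq: "c ^ 2 = (- l * nu l * b + l ^ 2) / 2" by simp
  show "\<not> is_square (c + l)" using c(1) by (simp add: Bset_def leg_eq_minus_1_iff add.commute)
  show "c' = c" if "c' ^ 2 = (- l * nu l * b + l ^ 2) / 2" "\<not> is_square (c' + l)" for c'
  proof (rule square_root_unique[where P="\<lambda>x. \<not> is_square x"])
    show "c' ^ 2 = c ^ 2" by (simp only: that(1) sq)
    show "\<not> \<not> is_square (l - c)" using c(1) leg_eq_1_iff[of "l - c"] by (simp add: Bset_def)
  qed (rule that(2))
qed

lemma leg_four: "leg (4::'a) = 1"
  using leg_square[OF two_neq_zero] by (simp add: power2_eq_square)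

lemma nu_two: "nu (2::'a) = 1"
  by (simp add: nu_def leg_four)

lemma pi_map_two: "pi_map (2::'a) = (\<lambda>b. b ^ 2 - 2)"
  using two_neq_zero by (simp add: fun_eq_iff pi_map_def kappa_def nu_two)

lemma Bdiag_two: "Bdiag (2::'a) = Bset 2 (-1) (-1)"
  by (simp add: Bdiag_def leg_four)

lemma inv_pi_map_two:
  assumes b: "b \<in> Bset (2::'a) (-1) 1"
  defines "c \<equiv> inv_into (Bset 2 (-1) 1) (\<lambda>b. b ^ 2 - 2) b"
  shows "c = (\<Prod>a\<in>Bset 2 (-1) (-1). b - a)" and "c ^ 2 = 2 + b" and "is_square (2 + c)"
    and "\<And>c'. c' ^ 2 = 2 + b \<Longrightarrow> is_square (2 + c') \<Longrightarrow> c' = c"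
proof -
  have half: "(2 * nu 2 * b + 2 ^ 2) / 2 = 2 + b" using two_neq_zero nu_two by (simp add: field_simps power2_eq_square)
  note inv = inv_pi_map[OF two_neq_zero b, unfolded pi_map_two Bdiag_two half, folded c_def]
  show "c = (\<Prod>a\<in>Bset 2 (-1) (-1). b - a)"
    using inv(1) two_neq_zero by (simp add: kappa_def nu_two)
  show "c ^ 2 = 2 + b" "is_square (2 + c)" using inv(2,3) by (simp_all add: add.commute)
  show "c' = c" if "c' ^ 2 = 2 + b" "is_square (2 + c')" for c'
    using that by (intro inv(4)) (simp_all add: add.commute)
qed

lemma inv_neg_pi_map_two:
  assumes b: "b \<in> Bset (2::'a) 1 (-1)"
  defines "c \<equiv> inv_into (Bset 2 1 (-1)) (\<lambda>b. 2 - b ^ 2) b"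
  shows "c = - of_int (leg (2::'a)) * (\<Prod>a\<in>Bset 2 (-1) (-1). b - a)" and "c ^ 2 = 2 - b"
    and "\<not> is_square (c + 2)"
    and "\<And>c'. c' ^ 2 = 2 - b \<Longrightarrow> \<not> is_square (c' + 2) \<Longrightarrow> c' = c"
proof -
  have half: "(- 2 * nu 2 * b + 2 ^ 2) / 2 = 2 - b" using two_neq_zero nu_two by (simp add: field_simps power2_eq_square)
  have neg: "(\<lambda>b. - pi_map 2 b) = (\<lambda>b::'a. 2 - b ^ 2)" by (simp add: pi_map_two)
  note inv = inv_neg_pi_map[OF two_neq_zero b, unfolded neg Bdiag_two half, folded c_def]
  show "c = - of_int (leg (2::'a)) * (\<Prod>a\<in>Bset 2 (-1) (-1). b - a)"
    using inv(1) two_neq_zero by (simp add: kappa_def nu_two)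
  show "c ^ 2 = 2 - b" "\<not> is_square (c + 2)" using inv(2,3) by simp_all
  show "c' = c" if "c' ^ 2 = 2 - b" "\<not> is_square (c' + 2)" for c'
    using that by (intro inv(4)) simp_all
qed

end

theorem theorem7p1:
  fixes TYPE_DUMMY :: "'a::{finite,field} itself"
  assumes "odd (card (UNIV::'a set))"
  shows
  "(bij_betw (\<lambda>b::'a. b ^ 2 - 2) (Bset 2 (-1) 1) (Bset 2 (-1) 1) \<and>
    (\<forall>b \<in> Bset (2::'a) (-1) 1.
       inv_into (Bset 2 (-1) 1) (\<lambda>b. b ^ 2 - 2) b = (\<Prod>a \<in> Bset 2 (-1) (-1). b - a) \<and>
       (let c = inv_into (Bset 2 (-1) 1) (\<lambda>b. b ^ 2 - 2) b in
          c ^ 2 = 2 + b \<and> is_square (2 + c) \<and>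
          (\<forall>c'. c' ^ 2 = 2 + b \<and> is_square (2 + c') \<longrightarrow> c' = c)))) \<and>
   (bij_betw (\<lambda>b::'a. 2 - b ^ 2) (Bset 2 1 (-1)) (Bset 2 1 (-1)) \<and>
    (\<forall>b \<in> Bset (2::'a) 1 (-1).
       inv_into (Bset 2 1 (-1)) (\<lambda>b. 2 - b ^ 2) b
         = - of_int (leg (2::'a)) * (\<Prod>a \<in> Bset 2 (-1) (-1). b - a) \<and>
       (let c = inv_into (Bset 2 1 (-1)) (\<lambda>b. 2 - b ^ 2) b in
          c ^ 2 = 2 - b \<and> \<not> is_square (c + 2) \<and>
          (\<forall>c'. c' ^ 2 = 2 - b \<and> \<not> is_square (c' + 2) \<longrightarrow> c' = c)))) \<and>
   (\<forall>l::'a. l \<noteq> 0 \<longrightarrow>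
      (let n = leg (2 * l);
           \<nu> = (of_int n :: 'a);
           m = mval TYPE('a);
           piL = (\<lambda>b. (2 * \<nu> / l) * b ^ 2 - \<nu> * l);
           sigL = (\<lambda>b. - (2 * \<nu> / l) * b ^ 2 + \<nu> * l)
       in bij_betw piL (Bset l (-1) 1) (Bset l (-1) 1) \<and>
          bij_betw sigL (Bset l 1 (-1)) (Bset l 1 (-1)) \<and>
          (\<forall>b \<in> Bset l (-1) 1.
             inv_into (Bset l (-1) 1) piL b
               = (2 * \<nu> / l) ^ (m - 1) * (\<Prod>a \<in> Bset l (-n) (-n). b - a)) \<and>
          (\<forall>b \<in> Bset l 1 (-1).
             inv_into (Bset l 1 (-1)) sigL b
               = - of_int (leg (2::'a)) * (2 * \<nu> / l) ^ (m - 1) * (\<Prod>a \<in> Bset l (-n) (-n). b - a)) \<and>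
          (\<forall>b \<in> Bset l (-1) 1.
             (let c = inv_into (Bset l (-1) 1) piL b in
                c ^ 2 = (l * \<nu> * b + l ^ 2) / 2 \<and> is_square (c + l) \<and>
                (\<forall>c'. c' ^ 2 = (l * \<nu> * b + l ^ 2) / 2 \<and> is_square (c' + l) \<longrightarrow> c' = c))) \<and>
          (\<forall>b \<in> Bset l 1 (-1).
             (let c = inv_into (Bset l 1 (-1)) sigL b in
                c ^ 2 = (- l * \<nu> * b + l ^ 2) / 2 \<and> \<not> is_square (c + l) \<and>
                (\<forall>c'. c' ^ 2 = (- l * \<nu> * b + l ^ 2) / 2 \<and> \<not> is_square (c' + l) \<longrightarrow> c' = c)))))"
proof -
  have odd: "odd CARD('a)" using assms by simp
  have pi: "(\<lambda>b. kappa l * b ^ 2 - nu l * l) = pi_map l"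
    and sigma: "(\<lambda>b. - kappa l * b ^ 2 + nu l * l) = (\<lambda>b. - pi_map l b)" for l :: 'a
    by (auto simp: fun_eq_iff pi_map_def)
  have i: "bij_betw (\<lambda>b::'a. b ^ 2 - 2) (Bset 2 (-1) 1) (Bset 2 (-1) 1)"
    using bij_betw_pi_map[OF odd two_neq_zero[OF odd]] by (simp add: pi_map_two[OF odd])
  have ii: "bij_betw (\<lambda>b::'a. 2 - b ^ 2) (Bset 2 1 (-1)) (Bset 2 1 (-1))"
    using bij_betw_neg_pi_map[OF odd two_neq_zero[OF odd]] by (simp add: pi_map_two[OF odd])
  show ?thesis
    unfolding Let_def nu_def[symmetric] kappa_def[symmetric] Bdiag_def[symmetric] pi sigma
  proof (intro conjI ballI allI impI)
  qed ((elim conjE)?, rule i ii bij_betw_pi_map[OF odd] bij_betw_neg_pi_map[OF odd]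
      inv_pi_map_two[OF odd] inv_neg_pi_map_two[OF odd] inv_pi_map[OF odd] inv_neg_pi_map[OF odd],
      (assumption+)?)+
qed

end
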